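(* Let $m\ge n$, let $\mathcal{U}$ be an open interval in $\mathbb{R}$, and let $F:\mathcal{U}\rightarrow M_{m\times n}(\mathbb{C})$ be a function each of whose entries is an analytic function on $\mathcal{U}$. Let $\mathcal{Y}(\mathcal{U})=\{x\in\mathcal{U} : F(x)\text{ has repeated singular values}\}$. Then either $\mathcal{Y}(\mathcal{U})=\mathcal{U}$ or $\mathcal{Y}(\mathcal{U})$ has no limit points in $\mathcal{U}$.
   Context: $M_{m\times n}(\mathbb{C})$ denotes the set of $m\times n$ complex matrices; throughout $m\ge n$. The singular values of $A\in M_{m\times n}(\mathbb{C})$ are the $n$ nonnegative square roots of the eigenvalues of $A^{\ast}A$, counted with multiplicity; $A$ has repeated singular values if two of these $n$ values coincide. A function on an open interval is analytic if around each point it is given by a convergent power series in the real variable (complex coefficients allowed). *)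

theory Defs
  imports "HOL-Analysis.Analysis" "Jordan_Normal_Form.Schur_Decomposition"
begin

definition conj_transpose :: "complex mat \<Rightarrow> complex mat" where
  "conj_transpose A = mat_adjoint A"

definition singular_values :: "complex mat \<Rightarrow> real multiset" where
  "singular_values A =
     image_mset (\<lambda>z. sqrt (Re z)) (proots (char_poly (conj_transpose A * A)))"

definition has_repeated_singular_values :: "complex mat \<Rightarrow> bool" where
  "has_repeated_singular_values A \<longleftrightarrow> (\<exists>s. count (singular_values A) s \<ge> 2)"

definition real_analytic_on :: "(real \<Rightarrow> complex) \<Rightarrow> real set \<Rightarrow> bool" where
  "real_analytic_on f U \<longleftrightarrow>
     (\<forall>x\<in>U. \<exists>r>0. \<exists>c::nat \<Rightarrow> complex. ball x r \<subseteq> U \<and>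
        (\<forall>y. \<bar>y - x\<bar> < r \<longrightarrow> (\<lambda>k. c k * complex_of_real (y - x) ^ k) sums f y))"

end

(* F x has a repeated singular value exactly when the eigenvalues of (F x)^* F x, which are
   nonnegative reals, are not distinct, i.e. when the discriminant of its characteristic polynomial
   vanishes. This discriminant is (det V)^2 for the Vandermonde matrix V of the eigenvalues, which is
   the determinant of the Hankel matrix of the power sums tr (((F x)^* F x)^(i+j)); so it is a
   polynomial in the entries of F x and their conjugates. Hence it is real analytic, i.e. locally
   the restriction of a holomorphic function, and by the identity theorem its zero set is either all
   of the interval U or has no limit point in U. *)
theory Submission
  imports Defs "HOL-Complex_Analysis.Complex_Analysis"
begin

section \<open>Locally holomorphic functions of a real variable\<close>

text \<open>Real analyticity in the form used below: locally, f is the restriction of a holomorphic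
  function, so closure under ring operations and the identity theorem come from complex analysis.\<close>
definition locally_holomorphic_on :: "(real \<Rightarrow> complex) \<Rightarrow> real set \<Rightarrow> bool" where
  "locally_holomorphic_on f U \<longleftrightarrow>
     (\<forall>x\<in>U. \<exists>r>0. \<exists>g. g holomorphic_on ball (complex_of_real x) r \<and> ball x r \<subseteq> U \<and>
        (\<forall>y\<in>ball x r. f y = g (complex_of_real y)))"

lemma locally_holomorphic_onE:
  assumes "locally_holomorphic_on f U" "x \<in> U"
  obtains r g where "r > 0" "g holomorphic_on ball (complex_of_real x) r" "ball x r \<subseteq> U"
    "\<And>y. y \<in> ball x r \<Longrightarrow> f y = g (complex_of_real y)"
  using assms unfolding locally_holomorphic_on_def by blast

lemma locally_holomorphic_on_cong:
  assumes "locally_holomorphic_on f U" "\<And>x. x \<in> U \<Longrightarrow> f x = g x"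
  shows "locally_holomorphic_on g U"
  using assms unfolding locally_holomorphic_on_def by (metis subsetD)

lemma locally_holomorphic_on_const:
  assumes "open U"
  shows "locally_holomorphic_on (\<lambda>_. c) U"
  unfolding locally_holomorphic_on_def
proof
  fix x assume "x \<in> U"
  with assms obtain r where "r > 0" "ball x r \<subseteq> U"
    by (meson open_contains_ball)
  then show "\<exists>r>0. \<exists>g. g holomorphic_on ball (complex_of_real x) r \<and> ball x r \<subseteq> U \<and>
      (\<forall>y\<in>ball x r. c = g (complex_of_real y))"
    by (intro exI[of _ r] conjI exI[of _ "\<lambda>_. c"]) auto
qed

lemma locally_holomorphic_on_binop:
  assumes op: "\<And>S a b. a holomorphic_on S \<Longrightarrow> b holomorphic_on S \<Longrightarrow>
      (\<lambda>z. op (a z) (b z)) holomorphic_on S"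
    and f: "locally_holomorphic_on f U" and g: "locally_holomorphic_on g U"
  shows "locally_holomorphic_on (\<lambda>x. op (f x) (g x)) U"
  unfolding locally_holomorphic_on_def
proof
  fix x assume x: "x \<in> U"
  obtain r1 h1 where r1: "r1 > 0" "h1 holomorphic_on ball (complex_of_real x) r1" "ball x r1 \<subseteq> U"
      "\<And>y. y \<in> ball x r1 \<Longrightarrow> f y = h1 (complex_of_real y)"
    using f x by (metis locally_holomorphic_onE)
  obtain r2 h2 where r2: "r2 > 0" "h2 holomorphic_on ball (complex_of_real x) r2"
      "\<And>y. y \<in> ball x r2 \<Longrightarrow> g y = h2 (complex_of_real y)"
    using g x by (metis locally_holomorphic_onE)
  define r where "r = min r1 r2"
  have "(\<lambda>z. op (h1 z) (h2 z)) holomorphic_on ball (complex_of_real x) r"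
    using r1(2) r2(2) by (intro op) (auto intro: holomorphic_on_subset simp: r_def)
  moreover have "ball x r \<subseteq> U"
    using r1(3) by (auto simp: r_def)
  moreover have "\<forall>y\<in>ball x r. op (f y) (g y) = op (h1 (complex_of_real y)) (h2 (complex_of_real y))"
    using r1(4) r2(3) by (simp add: r_def)
  moreover have "r > 0"
    using r1(1) r2(1) by (simp add: r_def)
  ultimately show "\<exists>r>0. \<exists>h. h holomorphic_on ball (complex_of_real x) r \<and> ball x r \<subseteq> U \<and>
      (\<forall>y\<in>ball x r. op (f y) (g y) = h (complex_of_real y))"
    by blast
qed

lemma locally_holomorphic_on_add:
  "locally_holomorphic_on f U \<Longrightarrow> locally_holomorphic_on g U \<Longrightarrow>
     locally_holomorphic_on (\<lambda>x. f x + g x) U"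
  by (rule locally_holomorphic_on_binop[where op = "(+)"]) (auto intro: holomorphic_intros)

lemma locally_holomorphic_on_mult:
  "locally_holomorphic_on f U \<Longrightarrow> locally_holomorphic_on g U \<Longrightarrow>
     locally_holomorphic_on (\<lambda>x. f x * g x) U"
  by (rule locally_holomorphic_on_binop[where op = "(*)"]) (auto intro: holomorphic_intros)

lemma locally_holomorphic_on_sum:
  assumes "open U" "finite A" "\<And>a. a \<in> A \<Longrightarrow> locally_holomorphic_on (f a) U"
  shows "locally_holomorphic_on (\<lambda>x. \<Sum>a\<in>A. f a x) U"
  using assms(2,3)
  by (induction A rule: finite_induct)
     (simp_all add: locally_holomorphic_on_const[OF assms(1)] locally_holomorphic_on_add)

lemma locally_holomorphic_on_prod:
  assumes "open U" "finite A" "\<And>a. a \<in> A \<Longrightarrow> locally_holomorphic_on (f a) U"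
  shows "locally_holomorphic_on (\<lambda>x. \<Prod>a\<in>A. f a x) U"
  using assms(2,3)
  by (induction A rule: finite_induct)
     (simp_all add: locally_holomorphic_on_const[OF assms(1)] locally_holomorphic_on_mult)

lemma image_cnj_ball: "cnj ` ball z r = ball (cnj z) r"
proof -
  have "dist (cnj z) w = dist z (cnj w)" for w
    by (metis complex_cnj_cnj complex_cnj_diff complex_mod_cnj dist_norm)
  then show ?thesis
    by (auto simp: image_cnj_conv_vimage_cnj)
qed

lemma locally_holomorphic_on_cnj:
  assumes "locally_holomorphic_on f U"
  shows "locally_holomorphic_on (\<lambda>x. cnj (f x)) U"
  unfolding locally_holomorphic_on_def
proof
  fix x assume "x \<in> U"
  then obtain r g where r: "r > 0" "g holomorphic_on ball (complex_of_real x) r" "ball x r \<subseteq> U"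
      "\<And>y. y \<in> ball x r \<Longrightarrow> f y = g (complex_of_real y)"
    using assms by (metis locally_holomorphic_onE)
  have "cnj \<circ> g \<circ> cnj holomorphic_on ball (complex_of_real x) r"
    using r(2) by (intro holomorphic_on_compose_cnj_cnj) (simp_all add: image_cnj_ball)
  moreover have "\<forall>y\<in>ball x r. cnj (f y) = (cnj \<circ> g \<circ> cnj) (complex_of_real y)"
    using r(4) by simp
  ultimately show "\<exists>r>0. \<exists>h. h holomorphic_on ball (complex_of_real x) r \<and> ball x r \<subseteq> U \<and>
      (\<forall>y\<in>ball x r. cnj (f y) = h (complex_of_real y))"
    using r(1,3) by blast
qed

lemma real_analytic_imp_locally_holomorphic:
  assumes "real_analytic_on f U"
  shows "locally_holomorphic_on f U"
  unfolding locally_holomorphic_on_def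
proof
  fix x assume "x \<in> U"
  then obtain r c where r: "r > 0" "ball x r \<subseteq> U"
     "\<And>y. \<bar>y - x\<bar> < r \<Longrightarrow> (\<lambda>k. c k * complex_of_real (y - x) ^ k) sums f y"
    using assms unfolding real_analytic_on_def by blast
  have radius: "ereal r \<le> conv_radius c"
  proof (rule conv_radius_geI_ex')
    fix s :: real assume "0 < s" "ereal s < ereal r"
    then have "(\<lambda>k. c k * complex_of_real ((x + s) - x) ^ k) sums f (x + s)"
      by (intro r(3)) simp
    then show "summable (\<lambda>k. c k * of_real s ^ k)"
      by (simp add: sums_iff)
  qed
  define g where "g z = (\<Sum>k. c k * (z - complex_of_real x) ^ k)" for z
  have "g holomorphic_on ball (complex_of_real x) r"
    unfolding holomorphic_on_open[OF open_ball]
  proof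
    fix z assume "z \<in> ball (complex_of_real x) r"
    then have "ereal (norm (z - complex_of_real x)) < ereal r"
      by (simp add: dist_norm norm_minus_commute)
    then have "ereal (norm (z - complex_of_real x)) < conv_radius c"
      using radius by (rule less_le_trans)
    then obtain d where "((\<lambda>w. \<Sum>k. c k * w ^ k) has_field_derivative d) (at (z - complex_of_real x))"
      using has_field_derivative_powser by blast
    then have "(g has_field_derivative d * 1) (at z)"
      unfolding g_def by (rule DERIV_chain2) (auto intro!: derivative_eq_intros)
    then show "\<exists>d. (g has_field_derivative d) (at z)" by blast
  qed
  moreover have "f y = g (complex_of_real y)" if "y \<in> ball x r" for y
  proof -
    have "\<bar>y - x\<bar> < r"
      using that by (simp add: dist_real_def abs_minus_commute)
    then have "(\<lambda>k. c k * complex_of_real (y - x) ^ k) sums f y"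
      by (rule r(3))
    then show ?thesis
      by (simp add: g_def sums_unique)
  qed
  ultimately show "\<exists>r>0. \<exists>g. g holomorphic_on ball (complex_of_real x) r \<and> ball x r \<subseteq> U \<and>
      (\<forall>y\<in>ball x r. f y = g (complex_of_real y))"
    using r(1,2) by blast
qed

lemma locally_holomorphic_on_limpt_zeros_imp_interior:
  assumes f: "locally_holomorphic_on f U" and x: "x \<in> U" and limpt: "x islimpt {y \<in> U. f y = 0}"
  shows "x \<in> interior {y. f y = 0}"
proof -
  obtain r g where r: "r > 0" "g holomorphic_on ball (complex_of_real x) r" "ball x r \<subseteq> U"
      "\<And>y. y \<in> ball x r \<Longrightarrow> f y = g (complex_of_real y)"
    using f x by (metis locally_holomorphic_onE)
  define Z where "Z = {y \<in> U. f y = 0} \<inter> ball x r"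
  have "x islimpt Z"
    unfolding Z_def using r(1) by (intro islimpt_Int_eventually[OF limpt] eventually_at_in_open') auto
  then have limpt_Z: "complex_of_real x islimpt complex_of_real ` Z"
    by (rule islimpt_isCont_image) (auto simp: eventually_at_filter intro: continuous_intros)
  have Z_ball: "complex_of_real ` Z \<subseteq> ball (complex_of_real x) r"
    by (auto simp: Z_def dist_of_real)
  have g_Z: "g z = 0" if "z \<in> complex_of_real ` Z" for z
    using that r(4) by (auto simp: Z_def)
  have "g (complex_of_real y) = 0" if "y \<in> ball x r" for y
    using analytic_continuation[OF r(2) open_ball connected_ball Z_ball _ limpt_Z g_Z] r(1) that
    by (simp add: dist_of_real)
  then have "ball x r \<subseteq> {y. f y = 0}"
    using r(4) by auto
  then show ?thesis
    using r(1) by (auto simp: mem_interior)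
qed

lemma locally_holomorphic_on_zero_or_zeros_not_limpt:
  assumes f: "locally_holomorphic_on f U" and "connected U"
  shows "(\<forall>x\<in>U. f x = 0) \<or> (\<forall>x\<in>U. \<not> x islimpt {y \<in> U. f y = 0})"
proof -
  define W where "W = U \<inter> interior {y. f y = 0}"
  have "openin (top_of_set U) W"
    unfolding W_def by (rule openin_open_Int[OF open_interior])
  moreover have "closedin (top_of_set U) W"
    unfolding closedin_limpt
  proof (intro conjI allI impI)
    fix x assume x: "x islimpt W \<and> x \<in> U"
    then have "x islimpt {y \<in> U. f y = 0}"
      by (rule islimpt_subset[OF conjunct1]) (auto simp: W_def dest: interior_subset[THEN subsetD])
    then show "x \<in> W"
      using locally_holomorphic_on_limpt_zeros_imp_interior[OF f] x by (simp add: W_def)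
  qed (simp add: W_def)
  ultimately have "W = {} \<or> W = U"
    using \<open>connected U\<close> unfolding connected_clopen by blast
  then show ?thesis
  proof
    assume "W = {}"
    then show ?thesis
      using locally_holomorphic_on_limpt_zeros_imp_interior[OF f] by (auto simp: W_def)
  next
    assume "W = U"
    then show ?thesis
      by (auto simp: W_def dest: interior_subset[THEN subsetD])
  qed
qed

section \<open>Traces of powers and the discriminant\<close>

definition trace_mat :: "'a::comm_monoid_add mat \<Rightarrow> 'a" where
  "trace_mat A = (\<Sum>i<dim_row A. A $$ (i, i))"

lemma trace_mat_mult_comm:
  fixes A B :: "'a::comm_semiring_0 mat"
  assumes A: "A \<in> carrier_mat n k" and B: "B \<in> carrier_mat k n"
  shows "trace_mat (A * B) = trace_mat (B * A)"
proof -
  have "trace_mat (A * B) = (\<Sum>i<n. \<Sum>l<k. A $$ (i, l) * B $$ (l, i))"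
    using A B by (auto simp: trace_mat_def scalar_prod_def atLeast0LessThan intro!: sum.cong)
  also have "\<dots> = (\<Sum>l<k. \<Sum>i<n. B $$ (l, i) * A $$ (i, l))"
    by (subst sum.swap) (simp add: mult.commute)
  also have "\<dots> = trace_mat (B * A)"
    using A B by (auto simp: trace_mat_def scalar_prod_def atLeast0LessThan intro!: sum.cong)
  finally show ?thesis .
qed

lemma trace_mat_similar_mat_wit:
  fixes A B :: "'a::comm_ring_1 mat"
  assumes "similar_mat_wit A B P Q"
  shows "trace_mat A = trace_mat B"
proof -
  define n where "n = dim_row A"
  note wit = similar_mat_witD[OF n_def assms]
  have "trace_mat A = trace_mat (P * (B * Q))"
    using wit by (simp add: assoc_mult_mat[of P n n B n Q n])
  also have "\<dots> = trace_mat (B * Q * P)"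
    using wit by (intro trace_mat_mult_comm) auto
  also have "B * Q * P = B"
    using wit by (simp add: assoc_mult_mat[of B n n Q n P n])
  finally show ?thesis .
qed

lemma upper_triangular_mult:
  fixes A B :: "'a::semiring_0 mat"
  assumes A: "A \<in> carrier_mat n n" "upper_triangular A"
    and B: "B \<in> carrier_mat n n" "upper_triangular B"
  shows "upper_triangular (A * B)"
    and "i < n \<Longrightarrow> (A * B) $$ (i, i) = A $$ (i, i) * B $$ (i, i)"
proof -
  have vanish: "A $$ (i, l) * B $$ (l, j) = 0" if "i < n" "l < n" "l < i \<or> j < l" for i j l
    using that upper_triangularD[OF A(2), of l i] upper_triangularD[OF B(2), of j l] A(1) B(1)
    by auto
  show "upper_triangular (A * B)"
  proof
    fix i j assume "j < i" "i < dim_row (A * B)"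
    then show "(A * B) $$ (i, j) = 0"
      using A(1) B(1) by (auto simp: scalar_prod_def intro!: sum.neutral vanish)
  qed
  assume i: "i < n"
  have "(A * B) $$ (i, i) = (\<Sum>l<n. A $$ (i, l) * B $$ (l, i))"
    using A(1) B(1) i by (simp add: scalar_prod_def atLeast0LessThan)
  also have "\<dots> = (\<Sum>l<n. if l = i then A $$ (i, i) * B $$ (i, i) else 0)"
    using i by (intro sum.cong) (auto intro!: vanish)
  finally show "(A * B) $$ (i, i) = A $$ (i, i) * B $$ (i, i)"
    using i by simp
qed

lemma upper_triangular_pow_mat:
  fixes A :: "'a::semiring_1 mat"
  assumes A: "A \<in> carrier_mat n n" "upper_triangular A"
  shows "upper_triangular (A ^\<^sub>m k) \<and> (\<forall>i<n. (A ^\<^sub>m k) $$ (i, i) = A $$ (i, i) ^ k)"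
proof (induction k)
  case 0
  show ?case using A(1) by auto
next
  case (Suc k)
  have "A ^\<^sub>m k \<in> carrier_mat n n"
    using A(1) by simp
  then show ?case
    using Suc.IH upper_triangular_mult[OF _ _ A] by (simp add: power_commutes)
qed

lemma trace_mat_pow_eq_power_sum:
  fixes M :: "'a::conjugatable_ordered_field mat"
  assumes M: "M \<in> carrier_mat n n" and char: "char_poly M = (\<Prod>a\<leftarrow>as. [:- a, 1:])"
  shows "trace_mat (M ^\<^sub>m k) = (\<Sum>a\<leftarrow>as. a ^ k)"
proof -
  obtain T P Q where "schur_decomposition M as = (T, P, Q)"
    by (cases "schur_decomposition M as")
  with schur_decomposition[OF M char] have wit: "similar_mat_wit M T P Q"
    and T: "upper_triangular T" "diag_mat T = as"
    by auto
  have T_carrier: "T \<in> carrier_mat n n"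
    using similar_mat_witD2[OF M wit] by simp
  have "trace_mat (M ^\<^sub>m k) = trace_mat (T ^\<^sub>m k)"
    using similar_mat_wit_pow[OF wit] by (rule trace_mat_similar_mat_wit)
  also have "\<dots> = (\<Sum>i<n. T $$ (i, i) ^ k)"
    using upper_triangular_pow_mat[OF T_carrier T(1)] T_carrier
    by (auto simp: trace_mat_def intro!: sum.cong)
  also have "\<dots> = (\<Sum>a\<leftarrow>as. a ^ k)"
    using T_carrier unfolding T(2)[symmetric]
    by (simp add: diag_mat_def interv_sum_list_conv_sum_set_nat atLeast0LessThan comp_def)
  finally show ?thesis .
qed

definition vandermonde_mat :: "'a::comm_semiring_1 list \<Rightarrow> 'a mat" where
  "vandermonde_mat as = mat (length as) (length as) (\<lambda>(l, i). as ! l ^ i)"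

lemma index_vandermonde_mat_mult_vec:
  fixes as :: "'a::comm_semiring_1 list"
  assumes "v \<in> carrier_vec (length as)" "l < length as"
  shows "(vandermonde_mat as *\<^sub>v v) $ l = poly (\<Sum>i<length as. monom (v $ i) i) (as ! l)"
  using assms
  by (simp add: vandermonde_mat_def scalar_prod_def atLeast0LessThan poly_sum poly_monom mult.commute)

lemma det_vandermonde_mat_eq_0_iff:
  fixes as :: "'a::idom list"
  shows "det (vandermonde_mat as) = 0 \<longleftrightarrow> \<not> distinct as"
proof
  let ?n = "length as"
  have V: "vandermonde_mat as \<in> carrier_mat ?n ?n"
    by (simp add: vandermonde_mat_def)
  assume "det (vandermonde_mat as) = 0"
  then obtain v where v: "v \<in> carrier_vec ?n" "v \<noteq> 0\<^sub>v ?n" "vandermonde_mat as *\<^sub>v v = 0\<^sub>v ?n"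
    using det_0_iff_vec_prod_zero[OF V] by blast
  define q where "q = (\<Sum>i<?n. monom (v $ i) i)"
  have coeff_q: "coeff q i = (if i < ?n then v $ i else 0)" for i
    by (simp add: q_def coeff_sum coeff_monom)
  obtain k where k: "k < ?n" "v $ k \<noteq> 0"
    using v(1,2) by (metis carrier_vecD eq_vecI index_zero_vec)
  then have "q \<noteq> 0"
    using coeff_q[of k] by auto
  moreover have "degree q < ?n"
    using k by (intro degree_lessI) (auto simp: coeff_q)
  moreover have "poly q a = poly 0 a" if "a \<in> set as" for a
    using that v index_vandermonde_mat_mult_vec[OF v(1)]
    by (auto simp: in_set_conv_nth q_def)
  ultimately show "\<not> distinct as"
    using k(1) poly_eqI_degree[of "set as" q 0] by (auto simp: distinct_card)
next
  assume "\<not> distinct as"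
  then obtain i j where ij: "i < length as" "j < length as" "i \<noteq> j" "as ! i = as ! j"
    by (auto simp: distinct_conv_nth)
  have V: "vandermonde_mat as \<in> carrier_mat (length as) (length as)"
    by (simp add: vandermonde_mat_def)
  have "row (vandermonde_mat as) i = row (vandermonde_mat as) j"
    using ij by (intro eq_vecI) (auto simp: vandermonde_mat_def)
  then show "det (vandermonde_mat as) = 0"
    by (rule det_identical_rows[OF V ij(3) ij(1) ij(2)])
qed

text \<open>Its determinant is the discriminant of the characteristic polynomial of M.\<close>
definition power_sum_hankel :: "'a::comm_ring_1 mat \<Rightarrow> 'a mat" where
  "power_sum_hankel M = mat (dim_row M) (dim_row M) (\<lambda>(i, j). trace_mat (M ^\<^sub>m (i + j)))"

lemma power_sum_hankel_eq_vandermonde: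
  fixes M :: "'a::conjugatable_ordered_field mat"
  assumes M: "M \<in> carrier_mat n n" and char: "char_poly M = (\<Prod>a\<leftarrow>as. [:- a, 1:])"
    and len: "length as = n"
  shows "power_sum_hankel M = transpose_mat (vandermonde_mat as) * vandermonde_mat as"
proof (rule eq_matI)
  fix i j
  assume "i < dim_row (transpose_mat (vandermonde_mat as) * vandermonde_mat as)"
    "j < dim_col (transpose_mat (vandermonde_mat as) * vandermonde_mat as)"
  then have ij: "i < n" "j < n"
    using len by (auto simp: vandermonde_mat_def)
  have "power_sum_hankel M $$ (i, j) = (\<Sum>a\<leftarrow>as. a ^ (i + j))"
    using M ij by (simp add: power_sum_hankel_def trace_mat_pow_eq_power_sum[OF M char])
  also have "\<dots> = (\<Sum>l<n. as ! l ^ i * as ! l ^ j)"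
    using len by (simp add: sum_list_sum_nth power_add atLeast0LessThan)
  also have "\<dots> = (transpose_mat (vandermonde_mat as) * vandermonde_mat as) $$ (i, j)"
    using ij len by (simp add: vandermonde_mat_def scalar_prod_def atLeast0LessThan)
  finally show "power_sum_hankel M $$ (i, j) =
      (transpose_mat (vandermonde_mat as) * vandermonde_mat as) $$ (i, j)" .
qed (use M len in \<open>auto simp: power_sum_hankel_def vandermonde_mat_def\<close>)

lemma det_power_sum_hankel_eq_0_iff:
  fixes M :: "'a::conjugatable_ordered_field mat"
  assumes M: "M \<in> carrier_mat n n" and char: "char_poly M = (\<Prod>a\<leftarrow>as. [:- a, 1:])"
    and len: "length as = n"
  shows "det (power_sum_hankel M) = 0 \<longleftrightarrow> \<not> distinct as"
proof -
  have V: "vandermonde_mat as \<in> carrier_mat n n"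
    using len by (simp add: vandermonde_mat_def)
  have "det (power_sum_hankel M) = det (vandermonde_mat as) * det (vandermonde_mat as)"
    using V by (simp add: power_sum_hankel_eq_vandermonde[OF M char len] det_mult[of _ n]
        det_transpose)
  then show ?thesis
    by (simp add: det_vandermonde_mat_eq_0_iff)
qed

section \<open>Singular values\<close>

lemma mat_adjoint_carrier_mat:
  "A \<in> carrier_mat m n \<Longrightarrow> mat_adjoint A \<in> carrier_mat n m"
  by (simp add: mat_adjoint_def mat_of_rows_def)

lemma index_mat_adjoint:
  "A \<in> carrier_mat m n \<Longrightarrow> j < n \<Longrightarrow> l < m \<Longrightarrow> mat_adjoint A $$ (j, l) = conjugate (A $$ (l, j))"
  by (simp add: mat_adjoint_def mat_of_rows_def)

lemma mat_adjoint_cscalar_prod: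
  fixes A :: "complex mat"
  assumes A: "A \<in> carrier_mat m n" and w: "w \<in> carrier_vec m" and v: "v \<in> carrier_vec n"
  shows "(mat_adjoint A *\<^sub>v w) \<bullet>c v = w \<bullet>c (A *\<^sub>v v)"
proof -
  have "(mat_adjoint A *\<^sub>v w) \<bullet>c v = (\<Sum>j<n. (\<Sum>l<m. cnj (A $$ (l, j)) * w $ l) * cnj (v $ j))"
    using A w v mat_adjoint_carrier_mat[OF A]
    by (auto simp: index_mat_adjoint scalar_prod_def atLeast0LessThan intro!: sum.cong)
  also have "\<dots> = (\<Sum>j<n. \<Sum>l<m. w $ l * (cnj (A $$ (l, j)) * cnj (v $ j)))"
    by (simp add: sum_distrib_left sum_distrib_right mult_ac)
  also have "\<dots> = (\<Sum>l<m. \<Sum>j<n. w $ l * (cnj (A $$ (l, j)) * cnj (v $ j)))"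
    by (rule sum.swap)
  also have "\<dots> = (\<Sum>l<m. w $ l * cnj (\<Sum>j<n. A $$ (l, j) * v $ j))"
    by (simp add: sum_distrib_left)
  also have "\<dots> = w \<bullet>c (A *\<^sub>v v)"
    using A w v by (auto simp: scalar_prod_def atLeast0LessThan intro!: sum.cong)
  finally show ?thesis .
qed

lemma eigenvalue_adjoint_mult_nonneg:
  fixes A :: "complex mat"
  assumes A: "A \<in> carrier_mat m n" and a: "eigenvalue (mat_adjoint A * A) a"
  shows "0 \<le> a"
proof -
  have B: "mat_adjoint A * A \<in> carrier_mat n n"
    using mat_adjoint_carrier_mat[OF A] A by simp
  obtain v where v: "v \<in> carrier_vec n" "v \<noteq> 0\<^sub>v n" "(mat_adjoint A * A) *\<^sub>v v = a \<cdot>\<^sub>v v"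
    using a B unfolding eigenvalue_def eigenvector_def by auto
  define w where "w = A *\<^sub>v v"
  have w: "w \<in> carrier_vec m"
    using A v(1) by (simp add: w_def)
  have "a * (v \<bullet>c v) = (mat_adjoint A * A *\<^sub>v v) \<bullet>c v"
    using v by simp
  also have "\<dots> = (mat_adjoint A *\<^sub>v w) \<bullet>c v"
    using mat_adjoint_carrier_mat[OF A] A v(1) by (simp add: w_def assoc_mult_mat_vec)
  also have "\<dots> = w \<bullet>c w"
    using mat_adjoint_cscalar_prod[OF A w v(1)] by (simp add: w_def)
  finally have eq: "a * (v \<bullet>c v) = w \<bullet>c w" .
  have "0 < v \<bullet>c v" "0 \<le> w \<bullet>c w"
    using v(1,2) w by auto
  then have vv: "Im (v \<bullet>c v) = 0" "0 < Re (v \<bullet>c v)" and ww: "Im (w \<bullet>c w) = 0" "0 \<le> Re (w \<bullet>c w)"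
    by (auto simp: less_complex_def less_eq_complex_def)
  have "Im a * Re (v \<bullet>c v) = 0"
    using arg_cong[OF eq, of Im] vv ww by simp
  then have "Im a = 0"
    using vv by simp
  moreover have "0 \<le> Re a * Re (v \<bullet>c v)"
    using arg_cong[OF eq, of Re] vv ww \<open>Im a = 0\<close> by simp
  then have "0 \<le> Re a"
    using vv by (simp add: zero_le_mult_iff)
  ultimately show ?thesis
    by (simp add: less_eq_complex_def)
qed

lemma proots_prod_list_linear: "proots (\<Prod>a\<leftarrow>as. [:- a, 1:]) = mset (as :: 'a::idom list)"
proof (induction as)
  case (Cons a as)
  have "(\<Prod>a\<leftarrow>as. [:- a, 1:]) \<noteq> (0 :: 'a poly)"
    by (auto simp: prod_list_zero_iff)
  with Cons.IH show ?case
    by (simp add: proots_mult del: mult_pCons_left)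
qed simp

lemma ex_count_mset_ge_2_iff: "(\<exists>s. 2 \<le> count (mset xs) s) \<longleftrightarrow> \<not> distinct xs"
proof -
  have "2 \<le> c \<longleftrightarrow> c \<noteq> 0 \<and> c \<noteq> 1" for c :: nat
    by arith
  then show ?thesis
    by (auto simp: distinct_count_atmost_1)
qed

lemma has_repeated_singular_values_iff:
  fixes A :: "complex mat"
  assumes A: "A \<in> carrier_mat m n" and char: "char_poly (mat_adjoint A * A) = (\<Prod>a\<leftarrow>as. [:- a, 1:])"
  shows "has_repeated_singular_values A \<longleftrightarrow> \<not> distinct as"
proof -
  have B: "mat_adjoint A * A \<in> carrier_mat n n"
    using mat_adjoint_carrier_mat[OF A] A by simp
  have "0 \<le> a" if "a \<in> set as" for a
  proof (rule eigenvalue_adjoint_mult_nonneg[OF A])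
    show "eigenvalue (mat_adjoint A * A) a"
      using that by (simp add: eigenvalue_root_char_poly[OF B] char poly_prod_list prod_list_zero_iff)
  qed
  then have inj: "inj_on (\<lambda>z. sqrt (Re z)) (set as)"
    by (intro inj_onI) (auto simp: less_eq_complex_def complex_eq_iff)
  have "singular_values A = mset (map (\<lambda>z. sqrt (Re z)) as)"
    by (simp add: singular_values_def conj_transpose_def char proots_prod_list_linear)
  then have "has_repeated_singular_values A \<longleftrightarrow> \<not> distinct (map (\<lambda>z. sqrt (Re z)) as)"
    unfolding has_repeated_singular_values_def by (simp only: ex_count_mset_ge_2_iff)
  with inj show ?thesis
    by (simp add: distinct_map)
qed

lemma det_power_sum_hankel_adjoint_mult_eq_0_iff:
  fixes A :: "complex mat"
  assumes A: "A \<in> carrier_mat m n"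
  shows "det (power_sum_hankel (mat_adjoint A * A)) = 0 \<longleftrightarrow> has_repeated_singular_values A"
proof -
  have B: "mat_adjoint A * A \<in> carrier_mat n n"
    using mat_adjoint_carrier_mat[OF A] A by simp
  obtain as where "char_poly (mat_adjoint A * A) = (\<Prod>a\<leftarrow>as. [:- a, 1:])" "length as = n"
    using char_poly_factorized[OF B] by blast
  then show ?thesis
    using det_power_sum_hankel_eq_0_iff[OF B] has_repeated_singular_values_iff[OF A] by simp
qed

section \<open>Matrices with locally holomorphic entries\<close>

definition locally_holomorphic_mat_on ::
  "nat \<Rightarrow> nat \<Rightarrow> (real \<Rightarrow> complex mat) \<Rightarrow> real set \<Rightarrow> bool" where
  "locally_holomorphic_mat_on m n A U \<longleftrightarrow>
     (\<forall>x\<in>U. A x \<in> carrier_mat m n) \<and>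
     (\<forall>i<m. \<forall>j<n. locally_holomorphic_on (\<lambda>x. A x $$ (i, j)) U)"

lemma locally_holomorphic_mat_onI:
  assumes "\<And>x. x \<in> U \<Longrightarrow> A x \<in> carrier_mat m n"
    and "\<And>i j. i < m \<Longrightarrow> j < n \<Longrightarrow> locally_holomorphic_on (\<lambda>x. A x $$ (i, j)) U"
  shows "locally_holomorphic_mat_on m n A U"
  using assms unfolding locally_holomorphic_mat_on_def by auto

lemma locally_holomorphic_mat_onD:
  assumes "locally_holomorphic_mat_on m n A U"
  shows "x \<in> U \<Longrightarrow> A x \<in> carrier_mat m n"
    and "i < m \<Longrightarrow> j < n \<Longrightarrow> locally_holomorphic_on (\<lambda>x. A x $$ (i, j)) U"
  using assms unfolding locally_holomorphic_mat_on_def by auto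

lemma locally_holomorphic_mat_on_mult:
  assumes U: "open U" and A: "locally_holomorphic_mat_on m k A U"
    and B: "locally_holomorphic_mat_on k n B U"
  shows "locally_holomorphic_mat_on m n (\<lambda>x. A x * B x) U"
proof (rule locally_holomorphic_mat_onI)
  fix x assume "x \<in> U"
  show "A x * B x \<in> carrier_mat m n"
    using locally_holomorphic_mat_onD(1)[OF A \<open>x \<in> U\<close>] locally_holomorphic_mat_onD(1)[OF B \<open>x \<in> U\<close>]
    by (rule mult_carrier_mat)
next
  fix i j assume ij: "i < m" "j < n"
  have "locally_holomorphic_on (\<lambda>x. \<Sum>l<k. A x $$ (i, l) * B x $$ (l, j)) U"
    using ij by (intro locally_holomorphic_on_sum[OF U] locally_holomorphic_on_mult
        locally_holomorphic_mat_onD(2)[OF A] locally_holomorphic_mat_onD(2)[OF B]) auto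
  moreover have "(\<Sum>l<k. A x $$ (i, l) * B x $$ (l, j)) = (A x * B x) $$ (i, j)" if "x \<in> U" for x
    using locally_holomorphic_mat_onD(1)[OF A that] locally_holomorphic_mat_onD(1)[OF B that] ij
    by (simp add: scalar_prod_def atLeast0LessThan)
  ultimately show "locally_holomorphic_on (\<lambda>x. (A x * B x) $$ (i, j)) U"
    by (rule locally_holomorphic_on_cong)
qed

lemma locally_holomorphic_mat_on_pow:
  assumes U: "open U" and A: "locally_holomorphic_mat_on n n A U"
  shows "locally_holomorphic_mat_on n n (\<lambda>x. A x ^\<^sub>m k) U"
proof (induction k)
  case 0
  show ?case
  proof (rule locally_holomorphic_mat_onI)
    fix x assume "x \<in> U"
    then show "A x ^\<^sub>m 0 \<in> carrier_mat n n"
      using locally_holomorphic_mat_onD(1)[OF A \<open>x \<in> U\<close>] by simp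
  next
    fix i j assume ij: "i < n" "j < n"
    have "(if i = j then 1 else 0) = (A x ^\<^sub>m 0) $$ (i, j)" if "x \<in> U" for x
      using locally_holomorphic_mat_onD(1)[OF A that] ij by simp
    with locally_holomorphic_on_const[OF U]
    show "locally_holomorphic_on (\<lambda>x. (A x ^\<^sub>m 0) $$ (i, j)) U"
      by (rule locally_holomorphic_on_cong)
  qed
next
  case (Suc k)
  show ?case
    using locally_holomorphic_mat_on_mult[OF U Suc.IH A] by simp
qed

lemma locally_holomorphic_mat_on_adjoint:
  assumes A: "locally_holomorphic_mat_on m n A U"
  shows "locally_holomorphic_mat_on n m (\<lambda>x. mat_adjoint (A x)) U"
proof (rule locally_holomorphic_mat_onI)
  fix x assume "x \<in> U"
  show "mat_adjoint (A x) \<in> carrier_mat n m"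
    using locally_holomorphic_mat_onD(1)[OF A \<open>x \<in> U\<close>] by (rule mat_adjoint_carrier_mat)
next
  fix i j assume ij: "i < n" "j < m"
  then have "locally_holomorphic_on (\<lambda>x. cnj (A x $$ (j, i))) U"
    by (intro locally_holomorphic_on_cnj locally_holomorphic_mat_onD(2)[OF A])
  moreover have "cnj (A x $$ (j, i)) = mat_adjoint (A x) $$ (i, j)" if "x \<in> U" for x
    using locally_holomorphic_mat_onD(1)[OF A that] ij by (simp add: index_mat_adjoint)
  ultimately show "locally_holomorphic_on (\<lambda>x. mat_adjoint (A x) $$ (i, j)) U"
    by (rule locally_holomorphic_on_cong)
qed

lemma locally_holomorphic_on_trace_mat:
  assumes U: "open U" and A: "locally_holomorphic_mat_on n n A U"
  shows "locally_holomorphic_on (\<lambda>x. trace_mat (A x)) U"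
proof -
  have "locally_holomorphic_on (\<lambda>x. \<Sum>i<n. A x $$ (i, i)) U"
    by (intro locally_holomorphic_on_sum[OF U] locally_holomorphic_mat_onD(2)[OF A]) auto
  moreover have "(\<Sum>i<n. A x $$ (i, i)) = trace_mat (A x)" if "x \<in> U" for x
    using locally_holomorphic_mat_onD(1)[OF A that] by (simp add: trace_mat_def)
  ultimately show ?thesis
    by (rule locally_holomorphic_on_cong)
qed

lemma locally_holomorphic_on_det:
  assumes U: "open U" and A: "locally_holomorphic_mat_on n n A U"
  shows "locally_holomorphic_on (\<lambda>x. det (A x)) U"
proof -
  have "p i < n" if "p permutes {0..<n}" "i < n" for p i
    using permutes_in_image[OF that(1), of i] that(2) by simp
  then have "locally_holomorphic_on
      (\<lambda>x. \<Sum>p\<in>{p. p permutes {0..<n}}. signof p * (\<Prod>i = 0..<n. A x $$ (i, p i))) U"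
    by (intro locally_holomorphic_on_sum[OF U] locally_holomorphic_on_mult
        locally_holomorphic_on_prod[OF U] locally_holomorphic_on_const[OF U] finite_permutations
        locally_holomorphic_mat_onD(2)[OF A]) auto
  moreover have "(\<Sum>p\<in>{p. p permutes {0..<n}}. signof p * (\<Prod>i = 0..<n. A x $$ (i, p i))) = det (A x)"
    if "x \<in> U" for x
    using det_def'[OF locally_holomorphic_mat_onD(1)[OF A that]] by simp
  ultimately show ?thesis
    by (rule locally_holomorphic_on_cong)
qed

lemma locally_holomorphic_mat_on_power_sum_hankel:
  assumes U: "open U" and A: "locally_holomorphic_mat_on n n A U"
  shows "locally_holomorphic_mat_on n n (\<lambda>x. power_sum_hankel (A x)) U"
proof (rule locally_holomorphic_mat_onI)
  fix x assume "x \<in> U"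
  then show "power_sum_hankel (A x) \<in> carrier_mat n n"
    using locally_holomorphic_mat_onD(1)[OF A \<open>x \<in> U\<close>] by (simp add: power_sum_hankel_def)
next
  fix i j assume ij: "i < n" "j < n"
  have "locally_holomorphic_on (\<lambda>x. trace_mat (A x ^\<^sub>m (i + j))) U"
    by (rule locally_holomorphic_on_trace_mat[OF U locally_holomorphic_mat_on_pow[OF U A]])
  moreover have "trace_mat (A x ^\<^sub>m (i + j)) = power_sum_hankel (A x) $$ (i, j)" if "x \<in> U" for x
    using locally_holomorphic_mat_onD(1)[OF A that] ij by (simp add: power_sum_hankel_def)
  ultimately show "locally_holomorphic_on (\<lambda>x. power_sum_hankel (A x) $$ (i, j)) U"
    by (rule locally_holomorphic_on_cong)
qed

theorem theorem3p8:
  fixes m n :: nat and U :: "real set" and F :: "real \<Rightarrow> complex mat"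
  assumes "m \<ge> n"
    and "open U" and "is_interval U" and "U \<noteq> {}"
    and "\<And>x. x \<in> U \<Longrightarrow> F x \<in> carrier_mat m n"
    and "\<And>i j. i < m \<Longrightarrow> j < n \<Longrightarrow> real_analytic_on (\<lambda>x. F x $$ (i, j)) U"
  shows "{x \<in> U. has_repeated_singular_values (F x)} = U
       \<or> (\<forall>x\<in>U. \<not> x islimpt {x \<in> U. has_repeated_singular_values (F x)})"
proof -
  define D where "D x = det (power_sum_hankel (mat_adjoint (F x) * F x))" for x
  have F: "locally_holomorphic_mat_on m n F U"
    using assms(5,6) by (simp add: locally_holomorphic_mat_on_def real_analytic_imp_locally_holomorphic)
  have "locally_holomorphic_mat_on n n (\<lambda>x. mat_adjoint (F x) * F x) U"
    by (rule locally_holomorphic_mat_on_mult[OF assms(2) locally_holomorphic_mat_on_adjoint[OF F] F])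
  then have "locally_holomorphic_on D U"
    unfolding D_def
    by (intro locally_holomorphic_on_det[OF assms(2)] locally_holomorphic_mat_on_power_sum_hankel[OF assms(2)])
  moreover have "{x \<in> U. has_repeated_singular_values (F x)} = {x \<in> U. D x = 0}"
    using assms(5) det_power_sum_hankel_adjoint_mult_eq_0_iff by (auto simp: D_def)
  ultimately show ?thesis
    using locally_holomorphic_on_zero_or_zeros_not_limpt[OF _ is_interval_connected[OF assms(3)]]
    by auto
qed

end
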